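(* For all planar forests $F,G$, the following are equivalent: (1) $\langle F,G\rangle\neq0$; (2) $\langle F,G\rangle=1$; (3) $m(G)\leq F$.
   Context: Let $K$ be a field. Planar rooted trees have their children linearly ordered left to right; a planar forest is a finite, possibly empty, sequence $t_1\cdots t_n$ of planar rooted trees ($1$ = empty forest). $\mathcal{H}$ is the free associative unital $K$-algebra on planar rooted trees, with basis the planar forests and product concatenation. $B^+(F)$ is the tree obtained by grafting the trees of $F$ on a new common root; $\varepsilon(F)=\delta_{F,1}$. $\Delta$ is the unique linear map with $\Delta(1)=1\otimes1$, $\Delta(xy)=(x\otimes1)\Delta(y)+\Delta(x)(1\otimes y)-x\otimes y$, $\Delta(B^+(x))=B^+(x)\otimes 1+(\mathrm{Id}\otimes B^+)\Delta(x)$. $\gamma$ is linear with $\gamma(t_1\cdots t_n)=\delta_{t_1,\bullet}t_2\cdots t_n$ ($\bullet$ the one-vertex tree), $\gamma(1)=0$. $\langle-,-\rangle$ is the unique bilinear form with $\langle1,x\rangle=\varepsilon(x)$, $\langle xy,z\rangle=\langle y\otimes x,\Delta(z)\rangle$ (with $\langle a\otimes b,c\otimes d\rangle=\langle a,c\rangle\langle b,d\rangle$), $\langle B^+(x),y\rangle=\langle x,\gamma(y)\rangle$. $m$ is the map on planar forests defined recursively by $m(1)=1$, $m(B^+(F_1)F_2)=B^+(m(F_2))m(F_1)$. Order on forests: an admissible transformation chooses a vertex $s$ which is the leftmost child of its parent $u$; if $u$ is not a root, with parent $r$, the subtree rooted at $s$ is moved to become a child of $r$ immediately to the left of $u$;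 if $u$ is a root, the subtree rooted at $s$ becomes a new tree immediately to the left of the tree of $u$; everything else unchanged. $F\leq G$ iff $G$ is obtained from $F$ by a finite (possibly empty) sequence of admissible transformations. *)

theory Defs
  imports Main
begin

text \<open>A planar rooted tree is a root together with the (left-to-right ordered)
list of subtrees grafted on it; a planar forest is a list of planar trees,
the empty list being the empty forest 1.\<close>

datatype ptree = Node "ptree list"

type_synonym pforest = "ptree list"

definition Bplus :: "pforest \<Rightarrow> ptree" where
  "Bplus F = Node F"

definition bullet :: ptree where
  "bullet = Node []"

definition eps :: "pforest \<Rightarrow> 'a::zero_neq_one" where
  "eps F = (if F = [] then 1 else 0)"

text \<open>gamma(t1...tn) = delta_{t1,bullet} t2...tn, gamma(1) = 0.
 None encodes the zero element of H, Some G' the basis element G'.\<close>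
fun gamma :: "pforest \<Rightarrow> pforest option" where
  "gamma [] = None"
| "gamma (t # F) = (if t = bullet then Some F else None)"

text \<open>Elements of H (x) H are represented as formal linear combinations:
 lists of triples (c, A, B) standing for the sum of c * (A (x) B).
 The coproduct of a basis forest is computed by the defining recursion:
 Delta(1) = 1(x)1, Delta(B+(x)) = B+(x)(x)1 + (Id (x) B+) Delta(x), and
 Delta(t y) = (t(x)1) Delta(y) + Delta(t) (1(x)y) - t(x)y (the product rule
 with x = t a tree, y the remaining forest).\<close>

function coprod :: "pforest \<Rightarrow> ('a::comm_ring_1 \<times> pforest \<times> pforest) list" where
  "coprod [] = [(1, [], [])]"
| "coprod [Node F] =
     (1, [Bplus F], []) # map (\<lambda>(c, A, B). (c, A, [Bplus B])) (coprod F)"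
| "coprod (t # u # F) =
     map (\<lambda>(c, A, B). (c, t # A, B)) (coprod (u # F))
     @ map (\<lambda>(c, A, B). (c, A, B @ (u # F))) (coprod [t])
     @ [(- 1, [t], u # F)]"
  apply pat_completeness apply auto done
termination
  by (relation "measure (size_list size)") auto

text \<open>The bilinear form on basis forests, computed by the defining rules
 <1,x> = eps(x), <xy,z> = <y (x) x, Delta z> (with x = t the first tree),
 <B+(x),y> = <x,gamma(y)>.\<close>

fun pairing :: "pforest \<Rightarrow> pforest \<Rightarrow> 'a::comm_ring_1" where
  "pairing [] G = eps G"
| "pairing [Node F] G = (case gamma G of None \<Rightarrow> 0 | Some G' \<Rightarrow> pairing F G')"
| "pairing (t # u # F) G =
     sum_list (map (\<lambda>(c, G1, G2). c * pairing (u # F) G1 * pairing [t] G2) (coprod G))"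

fun mmap :: "pforest \<Rightarrow> pforest" where
  "mmap [] = []"
| "mmap (Node F1 # F2) = Node (mmap F2) # mmap F1"

text \<open>One admissible transformation: a vertex s that is the leftmost child of u
 is detached (with its subtree) and placed immediately left of u, among the
 children of u's parent (or as a new tree in the forest, if u is a root).\<close>

inductive adm :: "pforest \<Rightarrow> pforest \<Rightarrow> bool" where
  here: "adm (A @ Node (s # C) # B) (A @ s # Node C # B)"
| inside: "adm H H' \<Longrightarrow> adm (A @ Node H # B) (A @ Node H' # B)"

definition forest_le :: "pforest \<Rightarrow> pforest \<Rightarrow> bool" where
  "forest_le F G = adm\<^sup>*\<^sup>* F G"

end

theory Submission
  imports Defs
begin

text \<open>Number the vertices of a forest in postorder (children before their parent, trees from
left to right). The first k vertices form a union of subtrees, so every forest G splits as the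
concatenation of a forest G'_k on its first k vertices and the remaining forest G''_k. Up to the
cancellation of the correction term of the product rule, the coproduct of G is the sum of the
G'_k (x) G''_k. By induction on the first argument this makes every pairing of forests 0 or 1,
and the pairing of t y with G reduces to the single cut with k the number of vertices of y.
The order matches: m(G) \<le> t y holds iff the cut of m(G) after the vertices of t yields pieces
below t and below y, and m exchanges the two pieces of a cut, the cut of G at k corresponding to
the cut of m(G) at the complementary number of vertices.\<close>

function nverts :: "pforest \<Rightarrow> nat" where
  "nverts [] = 0"
| "nverts (Node F # G) = Suc (nverts F + nverts G)"
  by pat_completeness auto
termination by (relation "measure (size_list size)") auto

lemma nverts_append [simp]: "nverts (F @ G) = nverts F + nverts G"
  by (induction F rule: nverts.induct) auto

lemma nverts_eq_0_iff [simp]: "nverts F = 0 \<longleftrightarrow> F = []"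
  by (cases F rule: nverts.cases) auto

lemma nverts_mmap [simp]: "nverts (mmap F) = nverts F"
  by (induction F rule: mmap.induct) auto

lemma mmap_mmap [simp]: "mmap (mmap F) = F"
  by (induction F rule: mmap.induct) auto

lemma mmap_eq_Nil_iff [simp]: "mmap F = [] \<longleftrightarrow> F = []"
  by (cases F rule: mmap.cases) auto

lemma mmap_eq_singleton_iff:
  "mmap G = [Node H] \<longleftrightarrow> (\<exists>G'. G = bullet # G' \<and> H = mmap G')"
  by (cases G rule: mmap.cases) (auto simp: bullet_def)

text \<open>cut_at k F = (F'_k, F''_k): the first component consists of the first k vertices of F
in postorder.\<close>

function cut_at :: "nat \<Rightarrow> pforest \<Rightarrow> pforest \<times> pforest" where
  "cut_at k [] = ([], [])"
| "cut_at k (Node F # G) =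
     (if k \<le> nverts F then (case cut_at k F of (A, B) \<Rightarrow> (A, Node B # G))
      else (case cut_at (k - nverts F - 1) G of (A, B) \<Rightarrow> (Node F # A, B)))"
  by pat_completeness auto
termination by (relation "measure (\<lambda>(k, F). size_list size F)") auto

lemma cut_at_Cons_le:
  "k \<le> nverts F \<Longrightarrow> cut_at k (Node F # G) = (fst (cut_at k F), Node (snd (cut_at k F)) # G)"
  by (simp add: split_def)

lemma cut_at_Cons_gt:
  "\<not> k \<le> nverts F \<Longrightarrow>
   cut_at k (Node F # G) =
     (Node F # fst (cut_at (k - nverts F - 1) G), snd (cut_at (k - nverts F - 1) G))"
  by (simp add: split_def)

declare cut_at.simps(2) [simp del]

lemma cut_at_0 [simp]: "cut_at 0 F = ([], F)"
  by (induction F rule: nverts.induct) (auto simp: cut_at_Cons_le)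

lemma nverts_fst_cut_at: "k \<le> nverts F \<Longrightarrow> nverts (fst (cut_at k F)) = k"
proof (induction k F rule: cut_at.induct)
  case (2 k F G)
  then show ?case
    by (cases "k \<le> nverts F") (auto simp: cut_at_Cons_le cut_at_Cons_gt)
qed simp

lemma cut_at_nverts_le: "nverts F \<le> k \<Longrightarrow> cut_at k F = (F, [])"
proof (induction k F rule: cut_at.induct)
  case (2 k F G)
  then show ?case
    by (cases "k \<le> nverts F") (auto simp: cut_at_Cons_le cut_at_Cons_gt)
qed simp

lemma cut_at_append:
  "cut_at k (F @ G) =
     (if k \<le> nverts F then (fst (cut_at k F), snd (cut_at k F) @ G)
      else (F @ fst (cut_at (k - nverts F) G), snd (cut_at (k - nverts F) G)))"
proof (induction F arbitrary: k rule: nverts.induct)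
  case (2 F G')
  then show ?case
    by (cases "k \<le> nverts F") (auto simp: cut_at_Cons_le cut_at_Cons_gt)
qed simp

lemma cut_at_mmap:
  "k \<le> nverts F \<Longrightarrow>
   cut_at k (mmap F) = (mmap (snd (cut_at (nverts F - k) F)), mmap (fst (cut_at (nverts F - k) F)))"
proof (induction F arbitrary: k rule: mmap.induct)
  case (2 F G)
  then show ?case
    by (cases "k \<le> nverts G") (auto simp: cut_at_Cons_le cut_at_Cons_gt)
qed simp

function cuts :: "pforest \<Rightarrow> (pforest \<times> pforest) list" where
  "cuts [] = [([], [])]"
| "cuts (Node F # G) =
     map (\<lambda>(A, B). (A, Node B # G)) (cuts F) @ map (\<lambda>(A, B). (Node F # A, B)) (cuts G)"
  by pat_completeness auto
termination by (relation "measure (size_list size)") auto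

lemma cuts_eq_map_cut_at: "cuts F = map (\<lambda>k. cut_at k F) [0..<Suc (nverts F)]"
proof (induction F rule: cuts.induct)
  case (2 F G)
  have "[0..<m + n] = [0..<m] @ map (\<lambda>j. j + m) [0..<n]" for m n :: nat
    by (metis add.commute map_add_upt upt_add_eq_append zero_le)
  from this[of "Suc (nverts F)" "Suc (nverts G)"]
  have "[0..<Suc (nverts (Node F # G))] =
        [0..<Suc (nverts F)] @ map (\<lambda>j. j + Suc (nverts F)) [0..<Suc (nverts G)]"
    by simp
  then show ?case
    using 2 by (auto simp: split_def cut_at_Cons_le cut_at_Cons_gt)
qed simp

text \<open>The correction term -t (x) y of the product rule cancels the term t (x) y that appears
in both products, leaving each cut exactly once.\<close>

lemma sum_coprod_eq_sum_cuts:
  "(\<Sum>(c, A, B)\<leftarrow>coprod G. c * f A B) = (\<Sum>(A, B)\<leftarrow>cuts G. f A B :: 'a::comm_ring_1)"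
proof (induction G arbitrary: f rule: coprod.induct)
  case (2 F)
  show ?case
    using "2"[of "\<lambda>A B. f A [Node B]"] by (simp add: comp_def split_def Bplus_def)
next
  case (3 t u F)
  obtain T where "t = Node T" by (cases t)
  then show ?case
    using "3.IH"(1)[of "\<lambda>A B. f (t # A) B"] "3.IH"(2)[of "\<lambda>A B. f A (B @ u # F)"]
    unfolding coprod.simps(3) by (simp add: comp_def split_def del: coprod.simps)
qed simp

lemma pairing_Cons_Cons:
  "(pairing (t # u # F) G :: 'a::comm_ring_1) =
   (\<Sum>k\<le>nverts G. pairing (u # F) (fst (cut_at k G)) * pairing [t] (snd (cut_at k G)))"
proof -
  have "(pairing (t # u # F) G :: 'a) =
        (\<Sum>(c, A, B)\<leftarrow>coprod G. c * (pairing (u # F) A * pairing [t] B))"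
    by (simp add: mult.assoc)
  also have "\<dots> = (\<Sum>k\<leftarrow>[0..<Suc (nverts G)].
                       pairing (u # F) (fst (cut_at k G)) * pairing [t] (snd (cut_at k G)))"
    unfolding sum_coprod_eq_sum_cuts cuts_eq_map_cut_at
    by (simp del: upt_Suc add: comp_def split_def)
  finally show ?thesis
    by (simp del: upt_Suc add: interv_sum_list_conv_sum_set_nat atLeast0LessThan lessThan_Suc_atMost)
qed

lemma adm_nverts: "adm F G \<Longrightarrow> nverts F = nverts G"
proof (induction rule: adm.induct)
  case (here A s C B)
  then show ?case by (cases s) simp
qed simp

lemma forest_le_refl [simp]: "forest_le F F"
  by (simp add: forest_le_def)

lemma forest_le_trans: "forest_le F G \<Longrightarrow> forest_le G H \<Longrightarrow> forest_le F H"
  unfolding forest_le_def by (rule rtranclp_trans)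

lemma adm_imp_forest_le: "adm F G \<Longrightarrow> forest_le F G"
  by (simp add: forest_le_def)

lemma forest_le_nverts: "forest_le F G \<Longrightarrow> nverts F = nverts G"
  unfolding forest_le_def by (induction rule: rtranclp_induct) (auto dest: adm_nverts)

lemma forest_le_map:
  assumes "\<And>X Y. adm X Y \<Longrightarrow> adm (f X) (f Y)" and "forest_le F G"
  shows "forest_le (f F) (f G)"
  using assms(2) unfolding forest_le_def
  by (induction rule: rtranclp_induct) (auto intro: rtranclp.rtrancl_into_rtrancl assms(1))

lemma adm_append: "adm F G \<Longrightarrow> adm (P @ F @ Q) (P @ G @ Q)"
proof (induction rule: adm.induct)
  case (here A s C B)
  then show ?case using adm.here[of "P @ A" s C "B @ Q"] by simp
next
  case (inside H H' A B)
  then show ?case using adm.inside[of H H' "P @ A" "B @ Q"] by simp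
qed

lemma forest_le_append: "forest_le F G \<Longrightarrow> forest_le U V \<Longrightarrow> forest_le (F @ U) (G @ V)"
  using forest_le_map[of "\<lambda>X. X @ U" F G] forest_le_map[of "\<lambda>X. G @ X" U V]
    adm_append[of _ _ "[]" U] adm_append[of _ _ G "[]"]
  by (simp add: forest_le_trans)

lemma forest_le_Node: "forest_le F G \<Longrightarrow> forest_le (A @ Node F # B) (A @ Node G # B)"
  by (rule forest_le_map) (auto intro: adm.inside)

lemma forest_le_Node_append: "forest_le (Node (A @ C) # B) (A @ Node C # B)"
proof (induction A)
  case (Cons s A)
  have "adm (Node (s # A @ C) # B) ([s] @ Node (A @ C) # B)"
    using adm.here[of "[]" s "A @ C" B] by simp
  moreover have "forest_le ([s] @ Node (A @ C) # B) ([s] @ A @ Node C # B)"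
    using forest_le_append[OF _ Cons.IH, of "[s]" "[s]"] by simp
  ultimately show ?case by (auto intro: forest_le_trans adm_imp_forest_le)
qed simp

lemma forest_le_cut_at: "forest_le F (fst (cut_at k F) @ snd (cut_at k F))"
proof (induction k F rule: cut_at.induct)
  case (2 k F G)
  show ?case
  proof (cases "k \<le> nverts F")
    case True
    then show ?thesis
      using forest_le_Node[OF "2.IH"(1)[OF True], of "[]" G]
        forest_le_Node_append[of "fst (cut_at k F)" "snd (cut_at k F)" G]
      by (simp add: cut_at_Cons_le forest_le_trans)
  next
    case False
    then show ?thesis
      using forest_le_append[of "[Node F]" "[Node F]", OF _ "2.IH"(2)[OF False]]
      by (simp add: cut_at_Cons_gt)
  qed
qed simp

abbreviation cut_le :: "nat \<Rightarrow> pforest \<Rightarrow> pforest \<Rightarrow> bool" where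
  "cut_le k F G \<equiv> forest_le (fst (cut_at k F)) (fst (cut_at k G)) \<and>
                   forest_le (snd (cut_at k F)) (snd (cut_at k G))"

lemma cut_at_mono_here: "cut_le k (Node (Node S # C) # B) (Node S # Node C # B)"
proof -
  have step: "forest_le (Node (Node X # Y) # Z) (Node X # Node Y # Z)" for X Y Z
    using adm.here[of "[]" "Node X" Y Z] by (simp add: adm_imp_forest_le)
  consider "k \<le> nverts S"
    | "\<not> k \<le> nverts S" "k - nverts S - 1 \<le> nverts C"
    | "\<not> k \<le> nverts S" "\<not> k - nverts S - 1 \<le> nverts C"
    by blast
  then show ?thesis
  proof cases
    case 3
    then have "k - (nverts S + Suc (nverts C)) - 1 = k - nverts S - 1 - nverts C - 1" by simp
    with 3 show ?thesis by (simp add: cut_at_Cons_le cut_at_Cons_gt step)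
  qed (simp_all add: cut_at_Cons_le cut_at_Cons_gt step)
qed

lemma adm_cut_at_mono: "adm F G \<Longrightarrow> cut_le k F G"
proof (induction arbitrary: k rule: adm.induct)
  case (here A s C B)
  obtain S where s: "s = Node S" by (cases s)
  show ?case
  proof (cases "k \<le> nverts A")
    case True
    then show ?thesis
      using adm_append[OF adm.here[of "[]" s C B], of "snd (cut_at k A)" "[]"]
      by (simp add: cut_at_append adm_imp_forest_le)
  next
    case False
    then show ?thesis
      using cut_at_mono_here[of "k - nverts A" S C B] forest_le_append[of A A]
      by (simp add: cut_at_append s)
  qed
next
  case (inside H H' A B)
  have "nverts H = nverts H'" using adm_nverts[OF inside.hyps] .
  then show ?case
    using inside adm_append[OF adm.inside[OF inside.hyps, of "[]" B], of "snd (cut_at k A)" "[]"]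
      forest_le_append[of A A] forest_le_Node[of _ _ "[]"]
    by (cases "k \<le> nverts A"; cases "k - nverts A \<le> nverts H")
      (simp_all add: cut_at_append cut_at_Cons_le cut_at_Cons_gt adm_imp_forest_le)
qed

lemma forest_le_cut_at_mono: "forest_le F G \<Longrightarrow> cut_le k F G"
  unfolding forest_le_def
  by (induction rule: rtranclp_induct)
    (auto dest: adm_cut_at_mono[of _ _ k] simp: forest_le_def intro: rtranclp_trans)

lemma forest_le_Cons_iff:
  "forest_le F (t # G) \<longleftrightarrow>
   forest_le (fst (cut_at (nverts [t]) F)) [t] \<and> forest_le (snd (cut_at (nverts [t]) F)) G"
proof
  have "cut_at (nverts [t]) (t # G) = ([t], G)"
    using cut_at_append[of "nverts [t]" "[t]" G] cut_at_nverts_le[of "[t]"] by simp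
  then show "forest_le F (t # G) \<Longrightarrow>
      forest_le (fst (cut_at (nverts [t]) F)) [t] \<and> forest_le (snd (cut_at (nverts [t]) F)) G"
    using forest_le_cut_at_mono[of F "t # G" "nverts [t]"] by simp
next
  assume "forest_le (fst (cut_at (nverts [t]) F)) [t] \<and> forest_le (snd (cut_at (nverts [t]) F)) G"
  then show "forest_le F (t # G)"
    using forest_le_append forest_le_cut_at[of F "nverts [t]"] forest_le_trans by fastforce
qed

lemma forest_le_singleton_iff: "forest_le F [Node G] \<longleftrightarrow> (\<exists>F'. F = [Node F'] \<and> forest_le F' G)"
proof
  show "forest_le F [Node G] \<Longrightarrow> \<exists>F'. F = [Node F'] \<and> forest_le F' G"
    unfolding forest_le_def
  proof (induction rule: converse_rtranclp_induct)
    case (step F H)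
    then obtain H' where H: "H = [Node H']" and H'_le: "adm\<^sup>*\<^sup>* H' G" by blast
    from step.hyps(1) show ?case unfolding H
    proof (cases rule: adm.cases)
      case (inside X X' A B)
      then have "A = [] \<and> B = []" by (cases A) auto
      with inside H H'_le show ?thesis by (auto intro: converse_rtranclp_into_rtranclp)
    qed simp
  qed simp
qed (auto intro: forest_le_Node[of _ _ "[]" "[]", simplified])

lemma mmap_le_Nil_iff: "forest_le (mmap G) [] \<longleftrightarrow> G = []"
  using forest_le_nverts[of "mmap G" "[]"] by auto

lemma mmap_le_singleton_iff:
  "forest_le (mmap G) [Node F] \<longleftrightarrow> (\<exists>G'. G = bullet # G' \<and> forest_le (mmap G') F)"
  by (auto simp: forest_le_singleton_iff mmap_eq_singleton_iff)

text \<open>Since m reverses the postorder, it maps the cut of G after k vertices to the swapped cut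
of m(G) after the remaining vertices.\<close>

lemma mmap_le_Cons_iff:
  "forest_le (mmap G) (t # F) \<longleftrightarrow>
   nverts F \<le> nverts G \<and> forest_le (mmap (snd (cut_at (nverts F) G))) [t] \<and>
   forest_le (mmap (fst (cut_at (nverts F) G))) F"
proof (cases "nverts G = nverts [t] + nverts F")
  case True
  then have "cut_at (nverts F) G =
      (mmap (snd (cut_at (nverts [t]) (mmap G))), mmap (fst (cut_at (nverts [t]) (mmap G))))"
    using cut_at_mmap[of "nverts F" "mmap G"] by simp
  with True show ?thesis
    unfolding forest_le_Cons_iff[of "mmap G" t F] by simp
next
  case False
  have "nverts (snd (cut_at (nverts F) G)) \<noteq> nverts [t]" if "nverts F \<le> nverts G"
    using forest_le_nverts[OF forest_le_cut_at[of G "nverts F"]] nverts_fst_cut_at[OF that] False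
    by simp
  then have "\<not> (nverts F \<le> nverts G \<and> forest_le (mmap (snd (cut_at (nverts F) G))) [t])"
    by (metis forest_le_nverts nverts_mmap)
  moreover have "nverts (t # F) = nverts [t] + nverts F"
    using nverts_append[of "[t]" F] by simp
  then have "\<not> forest_le (mmap G) (t # F)"
    using forest_le_nverts[of "mmap G" "t # F"] False by auto
  ultimately show ?thesis by blast
qed

lemma pairing_eq_indicator: "pairing F G = (if forest_le (mmap G) F then 1 else 0 :: 'a::comm_ring_1)"
proof (induction "nverts F" arbitrary: F G rule: less_induct)
  case less
  consider "F = []" | L where "F = [Node L]" | t u R where "F = t # u # R"
    by (metis list.exhaust ptree.exhaust)
  then show ?case
  proof cases
    case 1
    then show ?thesis by (simp add: eps_def mmap_le_Nil_iff)
  next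
    case 2
    have IH: "pairing L G' = (if forest_le (mmap G') L then 1 else 0 :: 'a)" for G'
      using less[of L] 2 by simp
    have "pairing F G = (if \<exists>G'. G = bullet # G' \<and> forest_le (mmap G') L then 1 else 0 :: 'a)"
      using 2 IH by (cases G) auto
    then show ?thesis
      unfolding 2 mmap_le_singleton_iff .
  next
    case 3
    let ?ind = "\<lambda>P. if P then 1 else 0 :: 'a"
    let ?term = "\<lambda>k. ?ind (forest_le (mmap (fst (cut_at k G))) (u # R)) *
                      ?ind (forest_le (mmap (snd (cut_at k G))) [t])"
    have IH: "pairing (u # R) A = ?ind (forest_le (mmap A) (u # R))"
      "pairing [t] A = ?ind (forest_le (mmap A) [t])" for A
      using less[of "u # R" A] less[of "[t]" A] 3 by (cases t; cases u; simp)+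
    have "pairing F G = (\<Sum>k\<le>nverts G. ?term k)"
      unfolding 3 pairing_Cons_Cons IH ..
    also have "\<dots> = (\<Sum>k\<le>nverts G. if k = nverts (u # R) then ?term k else 0)"
    proof (rule sum.cong)
      fix k assume "k \<in> {..nverts G}"
      then have "nverts (mmap (fst (cut_at k G))) = k" by (simp add: nverts_fst_cut_at)
      then show "?term k = (if k = nverts (u # R) then ?term k else 0)"
        by (auto dest: forest_le_nverts)
    qed simp
    also have "\<dots> = ?ind (forest_le (mmap G) F)"
      unfolding 3 mmap_le_Cons_iff[of G t "u # R"] by simp
    finally show ?thesis .
  qed
qed

theorem theorem37:
  fixes F G :: pforest
  shows "((pairing F G :: 'k::field) \<noteq> 0 \<longleftrightarrow> (pairing F G :: 'k) = 1)
       \<and> ((pairing F G :: 'k) = 1 \<longleftrightarrow> forest_le (mmap G) F)"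
  by (simp add: pairing_eq_indicator)

end
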